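(* Let $m,n,t\in\mathbf{Z}$ with $\gcd(m,n)=1$ satisfy $$t=\frac{-3(m^{3}+3m^{2}n-6mn^{2}+4n^{3})(m^{3}+3m^{2}n+3mn^{2}+4n^{3})(5m^{3}-3m^{2}n-3mn^{2}+2n^{3})}{(m^{3}-3mn^{2}+n^{3})^{3}}.$$ Then $m^{3}-3mn^{2}+n^{3}=\pm1$ or $m^{3}-3mn^{2}+n^{3}=\pm3$. *)

theory Defs
  imports Complex_Main
begin

end

theory Submission
  imports Defs "HOL-Computational_Algebra.Primes"
begin

text \<open>Write \<open>D = m\<^sup>3 - 3mn\<^sup>2 + n\<^sup>3\<close>. Clearing denominators, \<open>D\<close> divides three times the
  product of the three cubic factors of the numerator. For each factor \<open>F\<close> there are binary
  quadratic forms \<open>u, v, u', v'\<close> with \<open>uD + vF = 9n\<^sup>5\<close> and \<open>u'D + v'F = 9m\<^sup>5\<close> (resultant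
  identities), so every common divisor of \<open>D\<close> and \<open>F\<close> prime to 3 divides \<open>gcd(m,n)\<^sup>5 = 1\<close>.
  Finally \<open>D\<close> is not divisible by 9 when \<open>m, n\<close> are coprime, so the part of \<open>D\<close> prime to 3 is
  a unit.\<close>

lemma coprime_if_combinations_eq_coprime_powers:
  fixes q d a m n c u v u' v' :: "'a :: semiring_gcd"
  assumes "coprime m n" and "coprime c q" and "q dvd d"
    and "u * d + v * a = c * n ^ k" and "u' * d + v' * a = c * m ^ k"
  shows "coprime q a"
proof (rule coprimeI)
  fix g assume gq: "g dvd q" and ga: "g dvd a"
  have "coprime c g" using dvd_refl gq \<open>coprime c q\<close> by (rule coprime_divisors)
  have "g dvd d" using gq \<open>q dvd d\<close> by (rule dvd_trans)
  hence "g dvd c * n ^ k" "g dvd c * m ^ k"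
    unfolding assms(4,5)[symmetric] using ga by simp_all
  hence "g dvd n ^ k" "g dvd m ^ k"
    using \<open>coprime c g\<close> by (simp_all add: coprime_commute coprime_dvd_mult_right_iff)
  moreover have "coprime (m ^ k) (n ^ k)" using \<open>coprime m n\<close> by simp
  ultimately show "is_unit g" by (meson coprime_common_divisor)
qed

lemma even_cubic_form_imp_even:
  fixes m n :: int
  assumes "even (m^3 - 3*m*n^2 + n^3)"
  shows "even m \<and> even n"
  using assms by (cases "even m"; cases "even n") auto

lemma nine_dvd_cubic_form_imp_three_dvd:
  fixes m n :: int
  assumes nine: "9 dvd m^3 - 3*m*n^2 + n^3"
  shows "3 dvd m \<and> 3 dvd n"
proof -
  have D_sum: "m^3 - 3*m*n^2 + n^3 = (m + n)^3 - 3 * (m*n*(m + 2*n))"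
    by (simp add: algebra_simps power2_eq_square power3_eq_cube)
  have "3 dvd m^3 - 3*m*n^2 + n^3" using nine by (rule dvd_trans[rotated]) simp
  hence "3 dvd (m + n)^3" unfolding D_sum by (metis dvd_add dvd_triv_left diff_add_cancel)
  hence "3 dvd m + n" by (simp add: prime_dvd_power_int)
  then obtain k where n: "n = 3 * k - m" by (metis dvdE add_diff_cancel_left')
  have "3 * m^3 = 9 * (3*k^3 - 6*m*k^2 + 3*k*m^2) - (m^3 - 3*m*n^2 + n^3)"
    unfolding n by (simp add: algebra_simps power2_eq_square power3_eq_cube)
  also have "9 dvd \<dots>" using nine by (intro dvd_diff) simp_all
  finally have "3 * 3 dvd 3 * m^3" by simp
  hence "3 dvd m^3" by (subst (asm) dvd_mult_cancel_left) simp
  hence "3 dvd m" by (simp add: prime_dvd_power_int)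
  with \<open>3 dvd m + n\<close> show ?thesis by (simp add: dvd_add_right_iff)
qed

lemma coprime_cubic_form_divisor_numerator_factors:
  fixes m n q :: int
  assumes cop: "coprime m n" and "\<not> 3 dvd q" and qD: "q dvd m^3 - 3*m*n^2 + n^3"
  shows "coprime q ((m^3 + 3*m^2*n - 6*m*n^2 + 4*n^3) * (m^3 + 3*m^2*n + 3*m*n^2 + 4*n^3)
                      * (5*m^3 - 3*m^2*n - 3*m*n^2 + 2*n^3))"
proof -
  have "coprime 3 q" using \<open>\<not> 3 dvd q\<close> by (simp add: prime_imp_coprime)
  hence c9: "coprime (3^2) q" by (simp only: coprime_power_left_iff) simp
  note resultant = coprime_if_combinations_eq_coprime_powers[OF cop c9 qD, where k = 5]
  have "coprime q (m^3 + 3*m^2*n - 6*m*n^2 + 4*n^3)"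
    by (rule resultant[where u = "m^2 + 3*m*n - 7*n^2" and v = "4*n^2 - m^2"
          and u' = "7*m^2 - 14*m*n + 12*n^2" and v' = "2*m^2 + 8*m*n - 3*n^2"])
       (simp_all add: algebra_simps power2_eq_square power3_eq_cube numeral_eq_Suc)
  moreover have "coprime q (m^3 + 3*m^2*n + 3*m*n^2 + 4*n^3)"
    by (rule resultant[where u = "m*n + n^2" and v = "2*n^2 - m*n"
          and u' = "20*m^2 + 9*m*n + 28*n^2" and v' = "-11*m^2 + 24*m*n - 7*n^2"])
       (simp_all add: algebra_simps power2_eq_square power3_eq_cube numeral_eq_Suc)
  moreover have "coprime q (5*m^3 - 3*m^2*n - 3*m*n^2 + 2*n^3)"
    by (rule resultant[where u = "20*m^2 - 7*m*n - 15*n^2" and v = "12*n^2 - m*n - 4*m^2"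
          and u' = "2*n^2 - m*n - 6*m^2" and v' = "3*m^2 + 2*m*n - n^2"])
       (simp_all add: algebra_simps power2_eq_square power3_eq_cube numeral_eq_Suc)
  ultimately show ?thesis by simp
qed

lemma in_units_times_three_if_dvd_three_times_coprime:
  fixes d x :: int
  assumes "d dvd 3 * x" and "\<not> 9 dvd d"
    and cop: "\<And>q. q dvd d \<Longrightarrow> \<not> 3 dvd q \<Longrightarrow> coprime q x"
  shows "d \<in> {1, -1, 3, -3}"
proof -
  define q where "q = (if 3 dvd d then d div 3 else d)"
  have d_eq: "d = q \<or> d = 3 * q" and "q dvd d" unfolding q_def by auto
  have "\<not> 3 dvd q"
    using \<open>\<not> 9 dvd d\<close> unfolding q_def by (auto elim!: dvdE)
  hence "coprime 3 q" by (simp add: prime_imp_coprime)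
  hence "coprime q (3 * x)" using cop[OF \<open>q dvd d\<close> \<open>\<not> 3 dvd q\<close>] by (simp add: coprime_commute)
  moreover have "q dvd 3 * x" using \<open>q dvd d\<close> \<open>d dvd 3 * x\<close> by (rule dvd_trans)
  ultimately have "is_unit q" by (meson coprime_common_divisor dvd_refl)
  thus ?thesis using d_eq by auto
qed

theorem lemma5p1:
  fixes m n t :: int
  assumes "gcd m n = 1"
    and "of_int t = (of_int (-3 * (m^3 + 3*m^2*n - 6*m*n^2 + 4*n^3)
                          * (m^3 + 3*m^2*n + 3*m*n^2 + 4*n^3)
                          * (5*m^3 - 3*m^2*n - 3*m*n^2 + 2*n^3)) :: rat)
                     / of_int ((m^3 - 3*m*n^2 + n^3)^3)"
  shows "m^3 - 3*m*n^2 + n^3 \<in> {1, -1, 3, -3}"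
proof -
  define D where "D = m^3 - 3*m*n^2 + n^3"
  define X where "X = (m^3 + 3*m^2*n - 6*m*n^2 + 4*n^3) * (m^3 + 3*m^2*n + 3*m*n^2 + 4*n^3)
                        * (5*m^3 - 3*m^2*n - 3*m*n^2 + 2*n^3)"
  have cop: "coprime m n" using assms(1) by (simp add: coprime_iff_gcd_eq_1)
  have "D \<noteq> 0"
  proof
    assume "D = 0"
    hence "even m \<and> even n" using even_cubic_form_imp_even[of m n] unfolding D_def by simp
    thus False using coprime_common_divisor[OF cop, of 2] by auto
  qed
  have "(of_int t :: rat) = of_int (-3 * X) / of_int (D^3)"
    using assms(2) unfolding D_def X_def by (simp only: mult.assoc)
  moreover have "(of_int (D^3) :: rat) \<noteq> 0" using \<open>D \<noteq> 0\<close> by simp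
  ultimately have "of_int t * of_int (D^3) = (of_int (-3 * X) :: rat)"
    by (metis nonzero_eq_divide_eq)
  hence "t * D^3 = -3 * X" unfolding of_int_mult[symmetric] of_int_eq_iff .
  hence "D dvd -(3 * X)" by (metis dvd_triv_right dvd_mult power3_eq_cube mult_minus_left)
  hence "D dvd 3 * X" by (simp only: dvd_minus_iff)
  moreover have "\<not> 9 dvd D"
    using nine_dvd_cubic_form_imp_three_dvd[of m n] coprime_common_divisor[OF cop, of 3]
    unfolding D_def by auto
  ultimately show ?thesis
    using in_units_times_three_if_dvd_three_times_coprime[of D X]
      coprime_cubic_form_divisor_numerator_factors[OF cop]
    unfolding D_def X_def by blast
qed

end
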